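(* In the three-door Monty Hall game described in the context, let $Q$ be an arbitrary mixed strategy of Monte and $\theta\in\{1,2,3\}$. If Monte's pure strategy $(\theta,y)$ with $y=\min(\{1,2,3\}\setminus\{\theta\})$ has positive probability under $Q$, then Conie's pure strategy $\theta\,\mathrm{s}\,\mathrm{h}$ is not Bayesian for $Q$. If Monte's pure strategy $(\theta,y)$ with $y=\max(\{1,2,3\}\setminus\{\theta\})$ has positive probability under $Q$, then $\theta\,\mathrm{h}\,\mathrm{s}$ is not Bayesian for $Q$.
   Context: Doors are numbered $1,2,3$. A pure strategy of Monte is a pair $(\theta,d)$ with $\theta\in\{1,2,3\}$ (the door hiding the prize) and $d\in\{1,2,3\}\setminus\{\theta\}$ (six strategies). A pure strategy of Conie is a triple $x\,a\,b$ with $x\in\{1,2,3\}$ and $a,b\in\{\mathrm{h},\mathrm{s}\}$ (twelve strategies). Under the profile $((\theta,d),x\,a\,b)$: Monte offers door $y=\theta$ if $x\neq\theta$ and $y=d$ if $x=\theta$; Conie's action is $a$ if $y$ is the smaller of the two doors in $\{1,2,3\}\setminus\{x\}$ and $b$ otherwise; her final choice is $z=x$ for action $\mathrm{h}$ and $z=y$ for action $\mathrm{s}$; she wins (payoff 1) iff $z=\theta$, else payoff 0. A mixed strategy is a probability distribution on pure strategies. For a mixed strategy $Q$ of Monte, a pure strategy of Conie is Bayesian if it maximizes Conie's winning probability against $Q$ among all (pure or mixed) strategies of Conie. *)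

theory Defs
  imports Complex_Main
begin

definition doors :: "nat set" where "doors = {1, 2, 3}"

datatype action = Hold | Switch

definition monte_strats :: "(nat \<times> nat) set" where
  "monte_strats = {(\<theta>, d). \<theta> \<in> doors \<and> d \<in> doors - {\<theta>}}"

definition conie_strats :: "(nat \<times> action \<times> action) set" where
  "conie_strats = {(x, a, b). x \<in> doors}"

definition payoff :: "nat \<times> nat \<Rightarrow> nat \<times> action \<times> action \<Rightarrow> real" where
  "payoff m c = (case m of (\<theta>, d) \<Rightarrow> case c of (x, a, b) \<Rightarrow>
     (let y = (if x \<noteq> \<theta> then \<theta> else d);
          act = (if y = Min (doors - {x}) then a else b);
          z = (if act = Hold then x else y)
      in if z = \<theta> then 1 else 0))"

definition mixed_on :: "'a set \<Rightarrow> ('a \<Rightarrow> real) \<Rightarrow> bool" where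
  "mixed_on S Q \<longleftrightarrow> (\<forall>s. 0 \<le> Q s) \<and> (\<forall>s. s \<notin> S \<longrightarrow> Q s = 0) \<and> sum Q S = 1"

definition win :: "(nat \<times> nat \<Rightarrow> real) \<Rightarrow> nat \<times> action \<times> action \<Rightarrow> real" where
  "win Q c = (\<Sum>m\<in>monte_strats. Q m * payoff m c)"

definition win_mixed :: "(nat \<times> nat \<Rightarrow> real) \<Rightarrow> (nat \<times> action \<times> action \<Rightarrow> real) \<Rightarrow> real" where
  "win_mixed Q P = (\<Sum>c\<in>conie_strats. P c * win Q c)"

definition bayesian :: "(nat \<times> nat \<Rightarrow> real) \<Rightarrow> nat \<times> action \<times> action \<Rightarrow> bool" where
  "bayesian Q c \<longleftrightarrow> c \<in> conie_strats \<and>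
     (\<forall>P. mixed_on conie_strats P \<longrightarrow> win_mixed Q P \<le> win Q c)"

end

theory Submission
  imports Defs
begin

text \<open>Let \<open>m\<close> and \<open>M\<close> be the smaller and the larger door different from \<open>\<theta>\<close>.
  Playing \<open>\<theta> s h\<close>, Conie ends on \<open>m\<close> when offered \<open>m\<close> and on \<open>\<theta>\<close> when offered \<open>M\<close>,
  so she never ends on \<open>M\<close>: she loses whenever the prize is behind \<open>M\<close>. The strategy
  \<open>M s s\<close> loses exactly then, so it weakly dominates \<open>\<theta> s h\<close>, and strictly against
  Monte's \<open>(\<theta>, m)\<close>, where \<open>\<theta> s h\<close> switches away from the prize. Symmetrically \<open>m s s\<close> beats
  \<open>\<theta> h s\<close> whenever \<open>(\<theta>, M)\<close> has positive probability.\<close>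

lemma finite_monte_strats: "finite monte_strats"
proof (rule finite_subset)
  show "monte_strats \<subseteq> doors \<times> doors"
    unfolding monte_strats_def by auto
  show "finite (doors \<times> doors)"
    unfolding doors_def by simp
qed

lemma finite_conie_strats: "finite conie_strats"
proof (rule finite_subset)
  have "(UNIV :: action set) = {Hold, Switch}"
    using action.exhaust by blast
  then have "finite (UNIV :: action set)"
    by (metis finite.emptyI finite.insertI)
  then show "finite (doors \<times> (UNIV :: action set) \<times> (UNIV :: action set))"
    unfolding doors_def by (intro finite_cartesian_product) simp_all
qed (auto simp: conie_strats_def)

lemma win_less_if_weakly_dominated:
  assumes "mixed_on monte_strats Q"
    and "\<forall>m\<in>monte_strats. payoff m c \<le> payoff m c'"
    and "m\<^sub>0 \<in> monte_strats" "Q m\<^sub>0 > 0" "payoff m\<^sub>0 c < payoff m\<^sub>0 c'"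
  shows "win Q c < win Q c'"
  unfolding win_def
proof (rule sum_strict_mono_ex1[OF finite_monte_strats])
  have "\<forall>m. 0 \<le> Q m"
    using assms(1) unfolding mixed_on_def by blast
  then show "\<forall>m\<in>monte_strats. Q m * payoff m c \<le> Q m * payoff m c'"
    using assms(2) by (metis mult_left_mono)
  show "\<exists>m\<in>monte_strats. Q m * payoff m c < Q m * payoff m c'"
    using assms(3-5) by (auto intro: mult_strict_left_mono)
qed

lemma not_bayesian_if_win_less:
  assumes "c' \<in> conie_strats" "win Q c < win Q c'"
  shows "\<not> bayesian Q c"
proof
  assume "bayesian Q c"
  define P where "P = (\<lambda>c. if c = c' then 1 else 0 :: real)"
  have "mixed_on conie_strats P"
    unfolding mixed_on_def P_def using assms(1) finite_conie_strats by simp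
  moreover have "win_mixed Q P = (\<Sum>c\<in>conie_strats. if c = c' then win Q c else 0)"
    unfolding win_mixed_def P_def by (rule sum.cong) auto
  then have "win_mixed Q P = win Q c'"
    using assms(1) finite_conie_strats by simp
  ultimately show False
    using \<open>bayesian Q c\<close> assms(2) unfolding bayesian_def by fastforce
qed

lemma switch_hold_dominated:
  assumes "\<theta> \<in> doors"
  shows "Max (doors - {\<theta>}) \<in> doors"
    and "\<forall>m\<in>monte_strats. payoff m (\<theta>, Switch, Hold) \<le> payoff m (Max (doors - {\<theta>}), Switch, Switch)"
    and "(\<theta>, Min (doors - {\<theta>})) \<in> monte_strats"
    and "payoff (\<theta>, Min (doors - {\<theta>})) (\<theta>, Switch, Hold)
       < payoff (\<theta>, Min (doors - {\<theta>})) (Max (doors - {\<theta>}), Switch, Switch)"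
  using assms unfolding doors_def monte_strats_def payoff_def
  by (auto simp: insert_Diff_if)

lemma hold_switch_dominated:
  assumes "\<theta> \<in> doors"
  shows "Min (doors - {\<theta>}) \<in> doors"
    and "\<forall>m\<in>monte_strats. payoff m (\<theta>, Hold, Switch) \<le> payoff m (Min (doors - {\<theta>}), Switch, Switch)"
    and "(\<theta>, Max (doors - {\<theta>})) \<in> monte_strats"
    and "payoff (\<theta>, Max (doors - {\<theta>})) (\<theta>, Hold, Switch)
       < payoff (\<theta>, Max (doors - {\<theta>})) (Min (doors - {\<theta>}), Switch, Switch)"
  using assms unfolding doors_def monte_strats_def payoff_def
  by (auto simp: insert_Diff_if)

theorem mainTheorem4:
  fixes Q :: "nat \<times> nat \<Rightarrow> real" and \<theta> :: nat
  assumes "mixed_on monte_strats Q"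
    and "\<theta> \<in> doors"
  shows "(Q (\<theta>, Min (doors - {\<theta>})) > 0 \<longrightarrow> \<not> bayesian Q (\<theta>, Switch, Hold))
       \<and> (Q (\<theta>, Max (doors - {\<theta>})) > 0 \<longrightarrow> \<not> bayesian Q (\<theta>, Hold, Switch))"
proof (intro conjI impI)
  note sh = switch_hold_dominated[OF assms(2)]
  assume "Q (\<theta>, Min (doors - {\<theta>})) > 0"
  then show "\<not> bayesian Q (\<theta>, Switch, Hold)"
    using sh(1) conie_strats_def
    by (intro not_bayesian_if_win_less[of "(Max (doors - {\<theta>}), Switch, Switch)"]
        win_less_if_weakly_dominated[OF assms(1) sh(2,3) _ sh(4)]) auto
next
  note hs = hold_switch_dominated[OF assms(2)]
  assume "Q (\<theta>, Max (doors - {\<theta>})) > 0"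
  then show "\<not> bayesian Q (\<theta>, Hold, Switch)"
    using hs(1) conie_strats_def
    by (intro not_bayesian_if_win_less[of "(Min (doors - {\<theta>}), Switch, Switch)"]
        win_less_if_weakly_dominated[OF assms(1) hs(2,3) _ hs(4)]) auto
qed

end
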